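(* Let $n\ge2$. For $s=1,\dots,n-1$, $$(1+\mathfrak p_n)^*\cap(1+\mathfrak a_{n,s})^*=\Big(1+\sum_{|I|=s,\ n\in I}\mathfrak p_I\Big)^*,$$ and $(1+\mathfrak p_n)^*\cap(1+\mathfrak a_{n,n})^*=(1+F_n)^*$.
   Context: $K$ is a field. $\mathbb S_n$ is the $K$-algebra generated by $x_1,\dots,x_n,y_1,\dots,y_n$ with relations $y_ix_i=1$ and $[x_i,y_j]=[x_i,x_j]=[y_i,y_j]=0$ ($i\ne j$). $e_i:=1-x_iy_i$; $\mathfrak p_i$ is the ideal of $\mathbb S_n$ generated by $e_i$; for $I\subseteq\{1,\dots,n\}$, $\mathfrak p_I:=\prod_{i\in I}\mathfrak p_i$ (which equals $\bigcap_{i\in I}\mathfrak p_i$); $\mathfrak a_{n,s}:=\sum_{|I|=s}\mathfrak p_I$ for $1\le s\le n$; $F_n:=\mathfrak p_{\{1,\dots,n\}}=\mathfrak a_{n,n}$. For a proper ideal $\mathfrak b$ of $\mathbb S_n$, $(1+\mathfrak b)^*$ denotes the group of units of $\mathbb S_n$ lying in $1+\mathfrak b$. *)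

theory Defs
  imports "HOL-Library.Poly_Mapping" "HOL-Algebra.Ideal_Product"
begin

text \<open>A monomial x^a y^b (a, b multi-indices, a i = exponent of x_i, b i = exponent of y_i).
  Since y_i x_i = 1 and all generators with different indices commute, every element of
  S_n is uniquely a K-linear combination of such monomials (normal form), and
  x^a y^b * x^c y^d = x^(a + (c - b)) y^(d + (b - c)) coordinatewise (truncated subtraction).
  This is the bicyclic monoid, written additively so that the library monoid algebra
  (finitely supported functions with convolution) applies.\<close>

datatype bmon = BM "nat \<Rightarrow> nat" "nat \<Rightarrow> nat"

instantiation bmon :: monoid_add
begin
definition zero_bmon :: bmon where "zero_bmon = BM (\<lambda>_. 0) (\<lambda>_. 0)"
fun plus_bmon :: "bmon \<Rightarrow> bmon \<Rightarrow> bmon" where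
  "plus_bmon (BM a b) (BM c d) = BM (\<lambda>i. a i + (c i - b i)) (\<lambda>i. d i + (b i - c i))"
instance
proof
  fix p q r :: bmon
  show "p + q + r = p + (q + r)"
    by (cases p; cases q; cases r) (auto simp: fun_eq_iff split: nat_diff_split)
  show "0 + p = p" by (cases p) (simp add: zero_bmon_def)
  show "p + 0 = p" by (cases p) (simp add: zero_bmon_def)
qed
end

type_synonym 'k jac = "bmon \<Rightarrow>\<^sub>0 'k"

definition mon_n :: "nat \<Rightarrow> bmon set" where
  "mon_n n = {BM a b | a b. \<forall>j. j \<notin> {1..n} \<longrightarrow> a j = 0 \<and> b j = 0}"

definition S :: "nat \<Rightarrow> ('k::field) jac ring" where
  "S n = \<lparr> carrier = {f. Poly_Mapping.keys f \<subseteq> mon_n n}, mult = (*), one = 1, zero = 0, add = (+) \<rparr>"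

definition xg :: "nat \<Rightarrow> ('k::field) jac" where
  "xg i = Poly_Mapping.single (BM (\<lambda>j. if j = i then 1 else 0) (\<lambda>_. 0)) 1"

definition yg :: "nat \<Rightarrow> ('k::field) jac" where
  "yg i = Poly_Mapping.single (BM (\<lambda>_. 0) (\<lambda>j. if j = i then 1 else 0)) 1"

definition eg :: "nat \<Rightarrow> ('k::field) jac" where
  "eg i = 1 - xg i * yg i"

definition pid :: "nat \<Rightarrow> nat \<Rightarrow> ('k::field) jac set" where
  "pid n i = genideal (S n) {eg i}"

definition pI :: "nat \<Rightarrow> nat set \<Rightarrow> ('k::field) jac set" where
  "pI n I = foldr (\<lambda>i J. ideal_prod (S n) (pid n i) J) (sorted_list_of_set I) (carrier (S n))"

definition ideal_sum :: "('k::field) jac ring \<Rightarrow> ('k jac set) set \<Rightarrow> 'k jac set" where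
  "ideal_sum R \<I> = genideal R (\<Union>\<I>)"

definition a_ns :: "nat \<Rightarrow> nat \<Rightarrow> ('k::field) jac set" where
  "a_ns n s = ideal_sum (S n) {pI n I | I. I \<subseteq> {1..n} \<and> card I = s}"

definition F :: "nat \<Rightarrow> ('k::field) jac set" where
  "F n = pI n {1..n}"

definition units_1p :: "('a, 'm) ring_scheme \<Rightarrow> 'a set \<Rightarrow> 'a set" where
  "units_1p R b = Units R \<inter> (\<lambda>u. \<one>\<^bsub>R\<^esub> \<oplus>\<^bsub>R\<^esub> u) ` b"

end

theory Submission
  imports Defs
begin

text \<open>
  Since y_i e_i = 0 and a large power of y_i absorbs every x_i occurring in a given element,
  every f in p_i is annihilated from the left by some y_i^N.  If moreover f lies in an ideal J,
  the telescoping identity f = (1 - x_i^N y_i^N) f = \<Sum>j<N. (x_i^j e_i) (y_i^j f) exhibits f as an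
  element of p_i J.  Hence p_i \<inter> J = p_i J for every ideal J, and p_I is the intersection of the
  p_i with i in I.  Therefore p_n \<inter> a_{n,s} = p_n a_{n,s} is generated by the ideals
  p_n p_I = p_{I \<union> {n}} with |I| = s, and each of these lies in p_I' where I' arises from I by
  replacing one of its elements by n.  The statement about units follows because u \<mapsto> 1 + u
  is injective.
\<close>

lemma (in ring) ideal_if_closed:
  assumes "T \<subseteq> carrier R" "\<zero> \<in> T" "\<And>a b. a \<in> T \<Longrightarrow> b \<in> T \<Longrightarrow> a \<oplus> b \<in> T"
    "\<And>a x. a \<in> T \<Longrightarrow> x \<in> carrier R \<Longrightarrow> x \<otimes> a \<in> T"
    "\<And>a x. a \<in> T \<Longrightarrow> x \<in> carrier R \<Longrightarrow> a \<otimes> x \<in> T"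
  shows "ideal T R"
proof (rule idealI)
  show "subgroup T (add_monoid R)"
  proof
    fix a assume a: "a \<in> T"
    have "inv\<^bsub>add_monoid R\<^esub> a = \<ominus> a" by (simp add: a_inv_def)
    also have "\<dots> = (\<ominus> \<one>) \<otimes> a" using a assms(1) by (simp add: l_minus subsetD)
    also have "\<dots> \<in> T" using a by (intro assms(4)) auto
    finally show "inv\<^bsub>add_monoid R\<^esub> a \<in> T" .
  qed (use assms in auto)
qed (use assms in \<open>auto intro: ring_axioms\<close>)

lemma (in ring) ideal_prod_genideal_Union_subset:
  assumes P: "ideal P R" and \<A>: "\<And>A. A \<in> \<A> \<Longrightarrow> ideal A R"
  shows "P \<cdot> genideal R (\<Union>\<A>) \<subseteq> genideal R (\<Union>A\<in>\<A>. P \<cdot> A)"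
proof
  let ?B = "genideal R (\<Union>A\<in>\<A>. P \<cdot> A)"
  have generators: "(\<Union>A\<in>\<A>. P \<cdot> A) \<subseteq> carrier R"
    using ideal_prod_in_carrier[OF P \<A>] by blast
  have B: "ideal ?B R" by (rule genideal_ideal[OF generators])
  define Z where "Z = {g \<in> carrier R. \<forall>u\<in>P. u \<otimes> g \<in> ?B}"
  have "ideal Z R"
  proof (rule ideal_if_closed)
    show "Z \<subseteq> carrier R" by (auto simp: Z_def)
    show "\<zero> \<in> Z"
      using ideal.Icarr[OF P] additive_subgroup.zero_closed[OF ideal.axioms(1)[OF B]]
      by (auto simp: Z_def)
  next
    fix a b assume "a \<in> Z" "b \<in> Z"
    then show "a \<oplus> b \<in> Z"
      using ideal.Icarr[OF P] additive_subgroup.a_closed[OF ideal.axioms(1)[OF B]]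
      by (auto simp: Z_def r_distr)
  next
    fix a x assume a: "a \<in> Z" and x: "x \<in> carrier R"
    show "x \<otimes> a \<in> Z"
      using a x ideal.Icarr[OF P] ideal.I_r_closed[OF P]
      by (auto simp: Z_def m_assoc[symmetric])
    show "a \<otimes> x \<in> Z"
      using a x ideal.Icarr[OF P] ideal.I_r_closed[OF B]
      by (auto simp: Z_def m_assoc[symmetric])
  qed
  moreover have "\<Union>\<A> \<subseteq> Z"
  proof
    fix g assume "g \<in> \<Union>\<A>"
    then obtain A where A: "A \<in> \<A>" "g \<in> A" by blast
    have "u \<otimes> g \<in> ?B" if "u \<in> P" for u
      using ideal_prod.prod[OF that A(2)] A(1) genideal_self[OF generators] by blast
    then show "g \<in> Z" using A ideal.Icarr[OF \<A>] by (auto simp: Z_def)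
  qed
  ultimately have Z: "genideal R (\<Union>\<A>) \<subseteq> Z" by (rule genideal_minimal)
  fix f assume "f \<in> P \<cdot> genideal R (\<Union>\<A>)"
  then show "f \<in> ?B"
  proof (induction f rule: ideal_prod.induct)
    case (prod i j) then show ?case using Z by (auto simp: Z_def)
  next
    case (sum s1 s2) then show ?case
      using additive_subgroup.a_closed[OF ideal.axioms(1)[OF B]] by blast
  qed
qed

lemma (in ring) units_1p_Int:
  assumes "P \<subseteq> carrier R" "A \<subseteq> carrier R"
  shows "units_1p R P \<inter> units_1p R A = units_1p R (P \<inter> A)"
proof -
  have "inj_on (\<lambda>u. \<one> \<oplus> u) (carrier R)" by (auto intro: inj_onI)
  then show ?thesis
    unfolding units_1p_def using inj_on_image_Int[OF _ assms] by blast
qed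

lemma telescope_one_minus:
  "(\<Sum>j<N. x ^ j * (1 - x * y) * y ^ j) = (1::'a::ring_1) - x ^ N * y ^ N"
proof (induction N)
  case (Suc N)
  have "x ^ N * (1 - x * y) * y ^ N = x ^ N * y ^ N - x ^ Suc N * y ^ Suc N"
    unfolding power_Suc2[of x] power_Suc[of y]
    by (simp only: right_diff_distrib left_diff_distrib mult_1_right mult.assoc)
  then show ?case using Suc by simp
qed simp

lemma carrier_S: "carrier (S n :: ('k::field) jac ring) = {f. Poly_Mapping.keys f \<subseteq> mon_n n}"
  by (simp add: S_def)

lemma S_simps [simp]:
  "mult (S n :: ('k::field) jac ring) = (*)" "add (S n :: ('k::field) jac ring) = (+)"
  "one (S n :: ('k::field) jac ring) = 1" "zero (S n :: ('k::field) jac ring) = 0"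
  by (simp_all add: S_def)

lemma zero_in_mon_n: "(0::bmon) \<in> mon_n n"
  by (auto simp: mon_n_def zero_bmon_def)

lemma plus_in_mon_n: "p \<in> mon_n n \<Longrightarrow> q \<in> mon_n n \<Longrightarrow> p + q \<in> mon_n n"
  by (auto simp: mon_n_def)

lemma S_add_closed: "f \<in> carrier (S n) \<Longrightarrow> g \<in> carrier (S n) \<Longrightarrow> (f + g :: ('k::field) jac) \<in> carrier (S n)"
  using keys_add[of f g] by (auto simp: carrier_S)

lemma S_mult_closed: "f \<in> carrier (S n) \<Longrightarrow> g \<in> carrier (S n) \<Longrightarrow> (f * g :: ('k::field) jac) \<in> carrier (S n)"
  using keys_mult[of f g] by (auto simp: carrier_S intro!: plus_in_mon_n)

lemma S_uminus_closed: "f \<in> carrier (S n) \<Longrightarrow> (- f :: ('k::field) jac) \<in> carrier (S n)"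
  by (auto simp: carrier_S)

lemma S_zero_closed: "(0 :: ('k::field) jac) \<in> carrier (S n)"
  by (auto simp: carrier_S)

lemma S_one_closed: "(1 :: ('k::field) jac) \<in> carrier (S n)"
  by (auto simp: carrier_S zero_bmon_def[symmetric] zero_in_mon_n)

lemma S_diff_closed: "f \<in> carrier (S n) \<Longrightarrow> g \<in> carrier (S n) \<Longrightarrow> (f - g :: ('k::field) jac) \<in> carrier (S n)"
  using S_add_closed[OF _ S_uminus_closed] by (metis diff_conv_add_uminus)

lemma S_power_closed: "f \<in> carrier (S n) \<Longrightarrow> (f ^ k :: ('k::field) jac) \<in> carrier (S n)"
  by (induction k) (auto intro: S_one_closed S_mult_closed)

lemma ring_S: "ring (S n :: ('k::field) jac ring)"
proof (rule ringI)
  show "abelian_group (S n :: 'k jac ring)"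
    by (rule abelian_groupI)
      (auto intro: S_add_closed S_zero_closed S_uminus_closed add.assoc add.commute intro!: bexI[of _ "- _"])
  show "monoid (S n :: 'k jac ring)"
    by (rule monoidI) (auto intro: S_mult_closed S_one_closed mult.assoc)
qed (auto simp: distrib_left distrib_right)

lemma xg_in_S: "i \<in> {1..n} \<Longrightarrow> (xg i :: ('k::field) jac) \<in> carrier (S n)"
  by (auto simp: carrier_S xg_def mon_n_def)

lemma yg_in_S: "i \<in> {1..n} \<Longrightarrow> (yg i :: ('k::field) jac) \<in> carrier (S n)"
  by (auto simp: carrier_S yg_def mon_n_def)

lemma eg_in_S: "i \<in> {1..n} \<Longrightarrow> (eg i :: ('k::field) jac) \<in> carrier (S n)"
  by (auto simp: eg_def intro!: S_diff_closed S_one_closed S_mult_closed xg_in_S yg_in_S)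

lemma yg_mult_xg: "(yg i * xg i :: ('k::field) jac) = 1"
  by (simp add: yg_def xg_def mult_single zero_bmon_def[symmetric] flip: single_one)

lemma yg_mult_eg: "(yg i * eg i :: ('k::field) jac) = 0"
proof -
  have "(yg i * eg i :: 'k jac) = yg i - (yg i * xg i) * yg i"
    by (simp add: eg_def algebra_simps)
  then show ?thesis by (simp add: yg_mult_xg)
qed

lemma yg_power: "(yg i :: ('k::field) jac) ^ M = Poly_Mapping.single (BM (\<lambda>_. 0) (\<lambda>j. if j = i then M else 0)) 1"
proof (induction M)
  case 0 then show ?case by (simp add: zero_bmon_def[symmetric] flip: single_one)
next
  case (Suc M)
  then show ?case
    by (simp add: yg_def mult_single) (rule arg_cong2[where f=Poly_Mapping.single], auto simp: fun_eq_iff)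
qed

lemma single_commute_yg_power:
  assumes "a i = 0"
  shows "Poly_Mapping.single (BM a b) c * (yg i :: ('k::field) jac) ^ M = yg i ^ M * Poly_Mapping.single (BM a b) c"
  using assms by (simp add: yg_power mult_single)
    (rule arg_cong2[where f=Poly_Mapping.single], auto simp: fun_eq_iff)

lemma yg_power_mult_single:
  assumes "a i \<le> A"
  obtains a' b' where "a' i = 0"
    "(yg i :: ('k::field) jac) ^ A * Poly_Mapping.single (BM a b) c = Poly_Mapping.single (BM a' b') c"
  using assms by (intro that[of "\<lambda>j. a j - (if j = i then A else 0)"]) (simp_all add: yg_power mult_single)

lemma poly_mapping_sum_single_lookup:
  "f = (\<Sum>k\<in>Poly_Mapping.keys f. Poly_Mapping.single k (Poly_Mapping.lookup f k))"
  by (rule poly_mapping_eqI)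
    (auto simp: lookup_sum lookup_single when_def in_keys_iff sum.delta' simp del: lookup_not_eq_zero_eq_in_keys)

fun x_degree :: "nat \<Rightarrow> bmon \<Rightarrow> nat" where
  "x_degree i (BM a b) = a i"

text \<open>Taking \<open>A\<close> at least the \<open>x\<^sub>i\<close>-degree of every monomial of \<open>r\<close>, the element \<open>y\<^sub>i\<^sup>A r\<close>
  involves no \<open>x\<^sub>i\<close> and hence commutes with \<open>y\<^sub>i\<close>.\<close>
lemma yg_power_mult_commute_yg_power:
  obtains A where "\<And>M. (yg i :: ('k::field) jac) ^ M * (yg i ^ A * r) = (yg i ^ A * r) * yg i ^ M"
proof
  define A where "A = (\<Sum>k\<in>Poly_Mapping.keys r. x_degree i k)"
  have comm: "yg i ^ M * (yg i ^ A * Poly_Mapping.single k (Poly_Mapping.lookup r k))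
     = (yg i ^ A * Poly_Mapping.single k (Poly_Mapping.lookup r k)) * yg i ^ M"
    if k: "k \<in> Poly_Mapping.keys r" for k M
  proof -
    obtain a b where kab: "k = BM a b" by (cases k)
    have "a i \<le> A" unfolding A_def using k kab
      by (metis finite_keys member_le_sum x_degree.simps zero_le)
    then obtain a' b' where "a' i = 0" and
      "(yg i :: 'k jac) ^ A * Poly_Mapping.single k (Poly_Mapping.lookup r k) = Poly_Mapping.single (BM a' b') (Poly_Mapping.lookup r k)"
      using yg_power_mult_single kab by metis
    then show ?thesis using single_commute_yg_power[of a' i b' "Poly_Mapping.lookup r k" M] by simp
  qed
  show "yg i ^ M * (yg i ^ A * r) = (yg i ^ A * r) * yg i ^ M" for M
    by (subst (1 2) poly_mapping_sum_single_lookup[of r])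
      (simp add: sum_distrib_left sum_distrib_right comm)
qed

lemma pid_ideal: "i \<in> {1..n} \<Longrightarrow> ideal (pid n i :: ('k::field) jac set) (S n)"
  unfolding pid_def by (rule ring.genideal_ideal[OF ring_S]) (use eg_in_S in auto)

lemma eg_in_pid: "i \<in> {1..n} \<Longrightarrow> (eg i :: ('k::field) jac) \<in> pid n i"
  unfolding pid_def by (rule ring.genideal_self'[OF ring_S eg_in_S])

lemma pid_annihilated_by_yg_power:
  assumes i: "i \<in> {1..n}" and f: "f \<in> (pid n i :: ('k::field) jac set)"
  obtains N where "yg i ^ N * f = 0"
proof -
  interpret R: ring "S n :: 'k jac ring" by (rule ring_S)
  define T where "T = {f \<in> carrier (S n :: 'k jac ring). \<exists>N. yg i ^ N * f = 0}"
  have "ideal T (S n)"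
  proof (rule R.ideal_if_closed)
    show "T \<subseteq> carrier (S n)" by (auto simp: T_def)
    show "\<zero>\<^bsub>S n\<^esub> \<in> T" by (auto simp: T_def S_zero_closed)
  next
    fix a b :: "'k jac" assume "a \<in> T" "b \<in> T"
    then obtain N1 N2 where a: "a \<in> carrier (S n)" "yg i ^ N1 * a = 0"
      and b: "b \<in> carrier (S n)" "yg i ^ N2 * b = 0" by (auto simp: T_def)
    have "yg i ^ (N2 + N1) * a = 0" "yg i ^ (N1 + N2) * b = 0"
      by (simp_all add: power_add mult.assoc a b)
    then have "yg i ^ (N1 + N2) * (a + b) = 0" by (simp add: distrib_left add.commute)
    then show "a \<oplus>\<^bsub>S n\<^esub> b \<in> T" using a b by (auto simp: T_def S_add_closed)
  next
    fix a x :: "'k jac" assume "a \<in> T" and x: "x \<in> carrier (S n)"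
    then obtain N where a: "a \<in> carrier (S n)" "yg i ^ N * a = 0" by (auto simp: T_def)
    obtain A where A: "\<And>M. (yg i :: 'k jac) ^ M * (yg i ^ A * x) = (yg i ^ A * x) * yg i ^ M"
      using yg_power_mult_commute_yg_power by blast
    have "yg i ^ (N + A) * (x * a) = (yg i ^ N * (yg i ^ A * x)) * a"
      by (simp add: power_add mult.assoc)
    also have "\<dots> = ((yg i ^ A * x) * yg i ^ N) * a" by (simp only: A)
    also have "\<dots> = (yg i ^ A * x) * (yg i ^ N * a)" by (rule mult.assoc)
    finally have "yg i ^ (N + A) * (x * a) = 0" by (simp add: a)
    then show "x \<otimes>\<^bsub>S n\<^esub> a \<in> T" using a x by (auto simp: T_def S_mult_closed)
    have "yg i ^ N * (a * x) = 0" by (simp add: mult.assoc[symmetric] a)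
    then show "a \<otimes>\<^bsub>S n\<^esub> x \<in> T" using a x by (auto simp: T_def S_mult_closed)
  qed
  moreover have "eg i \<in> T"
    using eg_in_S[OF i] yg_mult_eg[of i] by (auto simp: T_def intro!: exI[of _ 1])
  ultimately have "pid n i \<subseteq> T" unfolding pid_def by (intro R.genideal_minimal) auto
  then show ?thesis using f that by (auto simp: T_def)
qed

lemma pid_ideal_prod_eq_Int:
  assumes i: "i \<in> {1..n}" and J: "ideal J (S n)"
  shows "ideal_prod (S n) (pid n i) J = (pid n i :: ('k::field) jac set) \<inter> J"
proof
  interpret R: ring "S n :: 'k jac ring" by (rule ring_S)
  have P: "ideal (pid n i :: 'k jac set) (S n)" by (rule pid_ideal[OF i])
  show "ideal_prod (S n) (pid n i) J \<subseteq> pid n i \<inter> J" by (rule R.ideal_prod_inter[OF P J])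
  show "pid n i \<inter> J \<subseteq> ideal_prod (S n) (pid n i) J"
  proof
    fix f assume "f \<in> pid n i \<inter> J"
    then have f: "f \<in> pid n i" "f \<in> J" by auto
    obtain N where N: "yg i ^ N * f = 0" using pid_annihilated_by_yg_power[OF i f(1)] .
    have summand: "(xg i ^ j * eg i) * (yg i ^ j * f) \<in> ideal_prod (S n) (pid n i) J" for j
      using ideal_prod.prod[of "xg i ^ j * eg i" "pid n i" "yg i ^ j * f" J "S n"]
        ideal.I_l_closed[OF P eg_in_pid[OF i] S_power_closed[OF xg_in_S[OF i]]]
        ideal.I_l_closed[OF J f(2) S_power_closed[OF yg_in_S[OF i]]]
      by simp
    have "f = (1 - xg i ^ N * yg i ^ N) * f" using N by (simp add: left_diff_distrib mult.assoc)
    also have "\<dots> = (\<Sum>j<N. (xg i ^ j * eg i) * (yg i ^ j * f))"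
      unfolding telescope_one_minus[symmetric] sum_distrib_right eg_def[symmetric]
      by (simp only: mult.assoc)
    also have "\<dots> \<in> ideal_prod (S n) (pid n i) J"
    proof (induction N)
      case 0
      show ?case
        using ideal_prod.prod[of 0 "pid n i" 0 J "S n"]
          additive_subgroup.zero_closed[OF ideal.axioms(1)[OF P]]
          additive_subgroup.zero_closed[OF ideal.axioms(1)[OF J]]
        by simp
    next
      case (Suc N)
      then show ?case using ideal_prod.sum[OF Suc summand[of N]] by simp
    qed
    finally show "f \<in> ideal_prod (S n) (pid n i) J" .
  qed
qed

lemma foldr_pid_ideal_prod:
  fixes L :: "nat list" and n :: nat
  defines "J \<equiv> foldr (\<lambda>i J. ideal_prod (S n) (pid n i) J) L (carrier (S n :: ('k::field) jac ring))"
  assumes "set L \<subseteq> {1..n}"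
  shows "J = carrier (S n) \<inter> \<Inter> (pid n ` set L) \<and> ideal J (S n)"
  unfolding J_def using assms(2)
proof (induction L)
  case Nil
  then show ?case by (simp add: ring.oneideal[OF ring_S])
next
  case (Cons i L)
  let ?J = "foldr (\<lambda>i J. ideal_prod (S n) (pid n i) J) L (carrier (S n :: 'k jac ring))"
  have i: "i \<in> {1..n}" using Cons.prems by simp
  have J: "?J = carrier (S n) \<inter> \<Inter> (pid n ` set L)" "ideal ?J (S n)"
    using Cons by auto
  have step: "foldr (\<lambda>i J. ideal_prod (S n) (pid n i) J) (i # L) (carrier (S n)) = ideal_prod (S n) (pid n i) ?J"
    by simp
  have "ideal_prod (S n) (pid n i) ?J = pid n i \<inter> ?J"
    by (rule pid_ideal_prod_eq_Int[OF i J(2)])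
  also have "\<dots> = carrier (S n) \<inter> \<Inter> (pid n ` set (i # L))"
    unfolding J(1) using ideal.Icarr[OF pid_ideal[OF i]] by auto
  finally show ?case
    unfolding step using ring.ideal_prod_is_ideal[OF ring_S pid_ideal[OF i] J(2)] by blast
qed

lemma
  assumes "I \<subseteq> {1..n}"
  shows pI_eq_Inter: "(pI n I :: ('k::field) jac set) = carrier (S n) \<inter> \<Inter> (pid n ` I)"
    and pI_ideal: "ideal (pI n I :: ('k::field) jac set) (S n)"
proof -
  have "finite I" using assms by (rule finite_subset) simp
  then have "set (sorted_list_of_set I) = I" by simp
  then show "pI n I = carrier (S n) \<inter> \<Inter> (pid n ` I)" "ideal (pI n I) (S n)"
    unfolding pI_def using foldr_pid_ideal_prod[of "sorted_list_of_set I" n] assms by auto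
qed

lemma pI_antimono: "J \<subseteq> I \<Longrightarrow> I \<subseteq> {1..n} \<Longrightarrow> (pI n I :: ('k::field) jac set) \<subseteq> pI n J"
  by (auto simp: pI_eq_Inter)

lemma pid_ideal_prod_pI:
  assumes i: "i \<in> {1..n}" and I: "I \<subseteq> {1..n}"
  shows "ideal_prod (S n) (pid n i) (pI n I) = (pI n (insert i I) :: ('k::field) jac set)"
proof -
  have "ideal_prod (S n) (pid n i) (pI n I) = (pid n i :: 'k jac set) \<inter> pI n I"
    by (rule pid_ideal_prod_eq_Int[OF i pI_ideal[OF I]])
  also have "\<dots> = pI n (insert i I)"
    using ideal.Icarr[OF pid_ideal[OF i]] i I by (auto simp: pI_eq_Inter)
  finally show ?thesis .
qed

lemma ideal_sum_ideal:
  "(\<And>J. J \<in> \<J> \<Longrightarrow> ideal J (S n)) \<Longrightarrow> ideal (ideal_sum (S n) \<J>) (S n :: ('k::field) jac ring)"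
  unfolding ideal_sum_def by (rule ring.genideal_ideal[OF ring_S]) (blast dest: ideal.Icarr)

lemma ideal_sum_singleton:
  assumes "ideal J (S n)"
  shows "ideal_sum (S n :: ('k::field) jac ring) {J} = J"
proof -
  have "J \<subseteq> carrier (S n)" using ideal.Icarr[OF assms] by blast
  then have "genideal (S n) J = J"
    using ring.genideal_minimal[OF ring_S assms order.refl] ring.genideal_self[OF ring_S] by blast
  then show ?thesis by (simp add: ideal_sum_def)
qed

lemma a_ns_ideal: "ideal (a_ns n s :: ('k::field) jac set) (S n)"
  unfolding a_ns_def by (rule ideal_sum_ideal) (auto simp: pI_ideal)

lemma pid_Int_a_ns:
  assumes i: "i \<in> {1..n}" and s: "1 \<le> s"
  shows "(pid n i :: ('k::field) jac set) \<inter> a_ns n s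
     = ideal_sum (S n) {pI n I | I. I \<subseteq> {1..n} \<and> card I = s \<and> i \<in> I}"
proof -
  interpret R: ring "S n :: 'k jac ring" by (rule ring_S)
  define \<A> :: "'k jac set set" where "\<A> = {pI n I | I. I \<subseteq> {1..n} \<and> card I = s}"
  define \<B> :: "'k jac set set" where "\<B> = {pI n I | I. I \<subseteq> {1..n} \<and> card I = s \<and> i \<in> I}"
  have \<A>_ideals: "\<And>A. A \<in> \<A> \<Longrightarrow> ideal A (S n)" by (auto simp: \<A>_def pI_ideal)
  have \<B>_carrier: "\<Union>\<B> \<subseteq> carrier (S n)" by (auto simp: \<B>_def pI_eq_Inter)
  have B: "ideal (ideal_sum (S n) \<B>) (S n)" by (rule ideal_sum_ideal) (auto simp: \<B>_def pI_ideal)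
  have swap: "ideal_prod (S n) (pid n i) A \<subseteq> ideal_sum (S n) \<B>" if "A \<in> \<A>" for A
  proof -
    obtain I where I: "I \<subseteq> {1..n}" "card I = s" and A: "A = pI n I"
      using \<open>A \<in> \<A>\<close> by (auto simp: \<A>_def)
    have "finite I" using I(1) by (rule finite_subset) simp
    then obtain m where m: "m \<in> I" and "i \<in> I \<Longrightarrow> m = i"
      using I(2) s by (metis card.empty not_one_le_zero ex_in_conv)
    define I' where "I' = insert i (I - {m})"
    have I': "I' \<subseteq> {1..n}" "card I' = s" "i \<in> I'"
      using I i m s \<open>finite I\<close> \<open>i \<in> I \<Longrightarrow> m = i\<close> by (auto simp: I'_def card_insert_if)
    have "ideal_prod (S n) (pid n i) A = pI n (insert i I)"
      unfolding A by (rule pid_ideal_prod_pI[OF i I(1)])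
    also have "\<dots> \<subseteq> pI n I'"
      using I(1) i by (intro pI_antimono) (auto simp: I'_def)
    also have "\<dots> \<subseteq> ideal_sum (S n) \<B>"
      using I' \<B>_carrier unfolding ideal_sum_def by (intro subset_trans[OF _ R.genideal_self]) (auto simp: \<B>_def)
    finally show ?thesis .
  qed
  have "pid n i \<inter> a_ns n s = ideal_prod (S n) (pid n i) (ideal_sum (S n) \<A>)"
    using pid_ideal_prod_eq_Int[OF i a_ns_ideal[of n s, where 'k='k]] by (simp add: a_ns_def \<A>_def)
  also have "\<dots> \<subseteq> genideal (S n) (\<Union>A\<in>\<A>. ideal_prod (S n) (pid n i) A)"
    unfolding ideal_sum_def by (rule R.ideal_prod_genideal_Union_subset[OF pid_ideal[OF i] \<A>_ideals])
  also have "\<dots> \<subseteq> ideal_sum (S n) \<B>"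
    using swap by (intro R.genideal_minimal[OF B]) blast
  finally have "pid n i \<inter> a_ns n s \<subseteq> ideal_sum (S n) \<B>" .
  moreover have "ideal_sum (S n) \<B> \<subseteq> pid n i"
    unfolding ideal_sum_def
    by (rule R.genideal_minimal[OF pid_ideal[OF i]]) (auto simp: \<B>_def pI_eq_Inter)
  moreover have "ideal_sum (S n) \<B> \<subseteq> a_ns n s"
    unfolding ideal_sum_def a_ns_def
    by (rule R.subset_Idl_subset) (auto simp: \<A>_def \<B>_def pI_eq_Inter)
  ultimately show ?thesis unfolding \<B>_def by blast
qed

lemma units_1p_pid_Int_a_ns:
  assumes "i \<in> {1..n}" "1 \<le> s"
  shows "units_1p (S n) (pid n i) \<inter> units_1p (S n) (a_ns n s)
      = units_1p (S n :: ('k::field) jac ring) (ideal_sum (S n) {pI n I | I. I \<subseteq> {1..n} \<and> card I = s \<and> i \<in> I})"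
proof -
  have "pid n i \<subseteq> carrier (S n :: 'k jac ring)" "a_ns n s \<subseteq> carrier (S n :: 'k jac ring)"
    using ideal.Icarr[OF pid_ideal[OF assms(1)]] ideal.Icarr[OF a_ns_ideal] by blast+
  from ring.units_1p_Int[OF ring_S this] show ?thesis by (simp only: pid_Int_a_ns[OF assms])
qed

lemma ideal_sum_pI_card_eq_F:
  assumes "1 \<le> n"
  shows "ideal_sum (S n) {pI n I | I. I \<subseteq> {1..n} \<and> card I = n \<and> n \<in> I} = (F n :: ('k::field) jac set)"
proof -
  have "I \<subseteq> {1..n} \<and> card I = n \<and> n \<in> I \<longleftrightarrow> I = {1..n}" for I
    using assms card_subset_eq[of "{1..n}" I] by auto
  then have "{pI n I | I. I \<subseteq> {1..n} \<and> card I = n \<and> n \<in> I} = {F n :: 'k jac set}"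
    by (simp add: F_def)
  then show ?thesis using ideal_sum_singleton[OF pI_ideal[of "{1..n}" n]] by (simp add: F_def)
qed

theorem lemma3p1:
  fixes n :: nat
  assumes "2 \<le> n"
  shows "(\<forall>s \<in> {1..n-1}.
           units_1p (S n :: ('k::field) jac ring) (pid n n) \<inter> units_1p (S n) (a_ns n s)
           = units_1p (S n) (ideal_sum (S n) {pI n I | I. I \<subseteq> {1..n} \<and> card I = s \<and> n \<in> I}))
      \<and> units_1p (S n :: ('k::field) jac ring) (pid n n) \<inter> units_1p (S n) (a_ns n n)
           = units_1p (S n) (F n)"
proof -
  have n: "n \<in> {1..n}" using assms by simp
  have "units_1p (S n) (pid n n) \<inter> units_1p (S n) (a_ns n n) = units_1p (S n :: 'k jac ring) (F n)"
    using units_1p_pid_Int_a_ns[OF n, of n, where 'k='k] ideal_sum_pI_card_eq_F[of n, where 'k='k] assms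
    by simp
  then show ?thesis using units_1p_pid_Int_a_ns[OF n, where 'k='k] by simp
qed

end
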